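(* Let $S=\{x\in\mathbb{R}^n\mid h_i^Tx\le b_i,\ i=1,\dots,r\}$ be a polyhedron, let $q:\mathbb{R}^{n\times n}\to\mathbb{R}$ be a strictly convex quadratic function and $U_0=\{A\in\mathbb{R}^{n\times n}\mid q(A)\le 0\}$, let $A_\star\in U_0$, let $x_1,\dots,x_k\in\mathbb{R}^n$, let $U_k=\{A\in U_0\mid Ax_j=A_\star x_j,\ A^2x_j=A_\star^2x_j,\ j=1,\dots,k\}$, and let $c\in\mathbb{R}^n$. Then the problem $$\min_{x\in\mathbb{R}^n} c^Tx\quad\text{s.t. } x\in S,\quad Ax\in S\ \ \forall A\in U_k,\quad A^2x\in S\ \ \forall A\in U_k$$ can be reformulated as a semidefinite program involving $3r$ scalar inequalities and $2r$ positive semidefinite constraints on matrices of size at most $(n^2+1)\times(n^2+1)$.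
   Context: Setting: the unknown linear system $x_{t+1}=A_\star x_t$ with ellipsoidal uncertainty set $U_0$; the data are $k$ observed length-two trajectories $(x_j,A_\star x_j,A_\star^2x_j)$. The feasible set of the displayed problem is the set of points that remain in $S$ for two steps under every matrix consistent with $U_0$ and the data. *)

theory Defs
  imports "HOL-Analysis.Analysis"
begin

text \<open>Polyhedron S = {x | h_i^T x <= b_i, i = 1..r} (indices shifted to 0..r-1).\<close>
definition polyS :: "nat \<Rightarrow> (nat \<Rightarrow> real^'n) \<Rightarrow> (nat \<Rightarrow> real) \<Rightarrow> (real^'n) set" where
  "polyS r h b = {x. \<forall>i<r. h i \<bullet> x \<le> b i}"

definition is_quadratic :: "(real^'n^'n \<Rightarrow> real) \<Rightarrow> bool" where
  "is_quadratic q \<longleftrightarrow> (\<exists>(Q::'n\<Rightarrow>'n\<Rightarrow>'n\<Rightarrow>'n\<Rightarrow>real) (L::'n\<Rightarrow>'n\<Rightarrow>real) (c0::real).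
     \<forall>A. q A = (\<Sum>i\<in>UNIV. \<Sum>j\<in>UNIV. \<Sum>k\<in>UNIV. \<Sum>l\<in>UNIV. Q i j k l * (A$i$j) * (A$k$l))
              + (\<Sum>i\<in>UNIV. \<Sum>j\<in>UNIV. L i j * (A$i$j)) + c0)"

definition strictly_convex :: "('a::real_vector \<Rightarrow> real) \<Rightarrow> bool" where
  "strictly_convex f \<longleftrightarrow> (\<forall>x y t. x \<noteq> y \<and> 0 < t \<and> t < 1 \<longrightarrow>
      f ((1 - t) *\<^sub>R x + t *\<^sub>R y) < (1 - t) * f x + t * f y)"

definition U0 :: "(real^'n^'n \<Rightarrow> real) \<Rightarrow> (real^'n^'n) set" where
  "U0 q = {A. q A \<le> 0}"

definition Uk :: "(real^'n^'n \<Rightarrow> real) \<Rightarrow> real^'n^'n \<Rightarrow> (nat \<Rightarrow> real^'n) \<Rightarrow> nat \<Rightarrow> (real^'n^'n) set" where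
  "Uk q Astar xs k = {A \<in> U0 q. \<forall>j<k. A *v xs j = Astar *v xs j \<and>
                                    (A ** A) *v xs j = (Astar ** Astar) *v xs j}"

definition robust_feasible ::
  "nat \<Rightarrow> (nat \<Rightarrow> real^'n) \<Rightarrow> (nat \<Rightarrow> real) \<Rightarrow> (real^'n^'n \<Rightarrow> real) \<Rightarrow> real^'n^'n
   \<Rightarrow> (nat \<Rightarrow> real^'n) \<Rightarrow> nat \<Rightarrow> (real^'n) set" where
  "robust_feasible r h b q Astar xs k =
     {x. x \<in> polyS r h b \<and> (\<forall>A\<in>Uk q Astar xs k. A *v x \<in> polyS r h b)
                        \<and> (\<forall>A\<in>Uk q Astar xs k. (A ** A) *v x \<in> polyS r h b)}"

definition psd :: "nat \<Rightarrow> (nat \<Rightarrow> nat \<Rightarrow> real) \<Rightarrow> bool" where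
  "psd m M \<longleftrightarrow> (\<forall>a<m. \<forall>b<m. M a b = M b a) \<and>
                (\<forall>v. 0 \<le> (\<Sum>a<m. \<Sum>b<m. v a * M a b * v b))"

definition aff_scalar :: "nat \<Rightarrow> real \<Rightarrow> real^'n \<Rightarrow> (nat \<Rightarrow> real) \<Rightarrow> real^'n \<Rightarrow> (nat \<Rightarrow> real) \<Rightarrow> real" where
  "aff_scalar N a0 ax az x z = a0 + ax \<bullet> x + (\<Sum>l<N. az l * z l)"

definition aff_matrix :: "nat \<Rightarrow> (nat \<Rightarrow> nat \<Rightarrow> real) \<Rightarrow> ('n \<Rightarrow> nat \<Rightarrow> nat \<Rightarrow> real)
     \<Rightarrow> (nat \<Rightarrow> nat \<Rightarrow> nat \<Rightarrow> real) \<Rightarrow> real^'n \<Rightarrow> (nat \<Rightarrow> real) \<Rightarrow> nat \<Rightarrow> nat \<Rightarrow> real" where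
  "aff_matrix N F0 Fx Fz x z = (\<lambda>a b. F0 a b + (\<Sum>i\<in>UNIV. x$i * Fx i a b) + (\<Sum>l<N. z l * Fz l a b))"

text \<open>Constraints of an SDP with p scalar affine inequalities (each "<= 0") and
  s linear matrix inequalities, in the variables x and auxiliary z_0..z_{N-1}.\<close>
definition sdp_constraints ::
  "nat \<Rightarrow> nat \<Rightarrow> nat
   \<Rightarrow> (nat \<Rightarrow> real) \<Rightarrow> (nat \<Rightarrow> real^'n) \<Rightarrow> (nat \<Rightarrow> nat \<Rightarrow> real)
   \<Rightarrow> (nat \<Rightarrow> nat) \<Rightarrow> (nat \<Rightarrow> nat \<Rightarrow> nat \<Rightarrow> real) \<Rightarrow> (nat \<Rightarrow> 'n \<Rightarrow> nat \<Rightarrow> nat \<Rightarrow> real)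
   \<Rightarrow> (nat \<Rightarrow> nat \<Rightarrow> nat \<Rightarrow> nat \<Rightarrow> real)
   \<Rightarrow> real^'n \<Rightarrow> (nat \<Rightarrow> real) \<Rightarrow> bool" where
  "sdp_constraints N p s a0 ax az m F0 Fx Fz x z \<longleftrightarrow>
     (\<forall>i<p. aff_scalar N (a0 i) (ax i) (az i) x z \<le> 0) \<and>
     (\<forall>t<s. psd (m t) (aff_matrix N (F0 t) (Fx t) (Fz t) x z))"

end

(* Parametrise the data-consistent matrices as A_star + P D, where P is a linear map onto the
   subspace of perturbations D with D x_j = 0 and D A_star x_j = 0, and put g D = q (A_star + P D).
   Each robust constraint h_i^T A x <= b_i or h_i^T A^2 x <= b_i for all A in U_k says that a
   function of D, quadratic in D and affine in x, is nonpositive on {g <= 0}.  If g < 0 somewhere,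
   the S-lemma turns this into an LMI of size n^2 + 1 in x and one multiplier l >= 0: the
   homogenization of l g minus that function must be a positive semidefinite form on R^(n x n) x R.
   The S-lemma itself comes from Dines' theorem (the joint range of two quadratic forms is convex)
   and a separating line.  If g >= 0 everywhere, strict convexity of q forces U_k = {A_star} and
   the feasible set is a polyhedron with 3r inequalities. *)
theory Submission
  imports Defs
begin

section \<open>Quadratic forms\<close>

definition quadratic_form :: "('a::real_vector \<Rightarrow> real) \<Rightarrow> bool" where
  "quadratic_form F \<longleftrightarrow> (\<exists>\<beta>. bilinear \<beta> \<and> (\<forall>w. F w = \<beta> w w))"

definition polar :: "('a::real_vector \<Rightarrow> real) \<Rightarrow> 'a \<Rightarrow> 'a \<Rightarrow> real" where
  "polar F u v = (F (u + v) - F u - F v) / 2"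

lemma polar_of_bilinear:
  assumes "bilinear \<beta>" "\<And>w. F w = \<beta> w w"
  shows "polar F u v = (\<beta> u v + \<beta> v u) / 2"
  using assms by (simp add: polar_def bilinear_ladd bilinear_radd)

lemma quadratic_form_expand:
  assumes "quadratic_form F"
  shows "F (c *\<^sub>R u + d *\<^sub>R v) = c\<^sup>2 * F u + 2 * c * d * polar F u v + d\<^sup>2 * F v"
proof -
  obtain \<beta> where "bilinear \<beta>" "\<And>w. F w = \<beta> w w"
    using assms quadratic_form_def by blast
  then show ?thesis
    by (simp add: polar_of_bilinear bilinear_ladd bilinear_radd bilinear_lmul bilinear_rmul
        power2_eq_square algebra_simps)
qed

lemma quadratic_form_scaleR: "quadratic_form F \<Longrightarrow> F (c *\<^sub>R u) = c\<^sup>2 * F u"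
  using quadratic_form_expand[of F c u 0 0] by (simp add: polar_def)

lemma quadratic_form_zero: "quadratic_form F \<Longrightarrow> F 0 = 0"
  using quadratic_form_scaleR[of F 0 0] by simp

lemma linear_real_lincomb:
  fixes f g :: "'a::real_vector \<Rightarrow> real"
  assumes "linear f" "linear g"
  shows "linear (\<lambda>x. a * f x + b * g x)"
  using assms by (simp add: linear_iff algebra_simps)

lemma bilinear_real_lincomb:
  fixes \<beta> \<gamma> :: "'a::real_vector \<Rightarrow> 'b::real_vector \<Rightarrow> real"
  assumes "bilinear \<beta>" "bilinear \<gamma>"
  shows "bilinear (\<lambda>x y. a * \<beta> x y + b * \<gamma> x y)"
  using assms unfolding bilinear_def by (simp add: linear_real_lincomb)

lemma quadratic_form_lincomb:
  assumes "quadratic_form F" "quadratic_form G"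
  shows "quadratic_form (\<lambda>w. a * F w + b * G w)"
proof -
  obtain \<beta> \<gamma> where "bilinear \<beta>" "\<And>w. F w = \<beta> w w" "bilinear \<gamma>" "\<And>w. G w = \<gamma> w w"
    using assms quadratic_form_def by metis
  then show ?thesis
    unfolding quadratic_form_def
    by (intro exI[of _ "\<lambda>x y. a * \<beta> x y + b * \<gamma> x y"]) (simp add: bilinear_real_lincomb)
qed

lemma polar_diff: "polar (\<lambda>w. F w - G w) u v = polar F u v - polar G u v"
  by (simp add: polar_def field_simps)

lemma polar_cmult: "polar (\<lambda>w. c * F w) u v = c * polar F u v"
  by (simp add: polar_def field_simps)

lemma polar_sum: "polar (\<lambda>w. \<Sum>i\<in>S. F i w) u v = (\<Sum>i\<in>S. polar (F i) u v)"
  by (simp add: polar_def sum_subtractf flip: sum_divide_distrib)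

lemma polar_snd_square: "polar (\<lambda>w. (snd w)\<^sup>2) u v = snd u * snd v"
  by (simp add: polar_def power2_eq_square algebra_simps)

lemma quadratic_form_sum_scaleR:
  assumes "quadratic_form \<Phi>"
  shows "\<Phi> (\<Sum>a<m. v a *\<^sub>R e a) = (\<Sum>a<m. \<Sum>b<m. v a * polar \<Phi> (e a) (e b) * v b)"
proof -
  obtain \<beta> where \<beta>: "bilinear \<beta>" "\<And>w. \<Phi> w = \<beta> w w"
    using assms quadratic_form_def by metis
  have "\<Phi> (\<Sum>a<m. v a *\<^sub>R e a) = (\<Sum>a<m. \<Sum>b<m. v a * \<beta> (e a) (e b) * v b)"
    by (simp add: \<beta>(2) bilinear_sum[OF \<beta>(1)] sum.cartesian_product bilinear_lmul[OF \<beta>(1)]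
        bilinear_rmul[OF \<beta>(1)] mult_ac)
  moreover have "(\<Sum>a<m. \<Sum>b<m. v a * \<beta> (e b) (e a) * v b) = (\<Sum>a<m. \<Sum>b<m. v a * \<beta> (e a) (e b) * v b)"
    by (subst sum.swap) (simp add: mult_ac)
  moreover have "(\<Sum>a<m. \<Sum>b<m. v a * polar \<Phi> (e a) (e b) * v b) =
      ((\<Sum>a<m. \<Sum>b<m. v a * \<beta> (e a) (e b) * v b) + (\<Sum>a<m. \<Sum>b<m. v a * \<beta> (e b) (e a) * v b)) / 2"
    by (simp add: polar_of_bilinear[OF \<beta>] sum.distrib ring_distribs flip: sum_divide_distrib)
  ultimately show ?thesis by simp
qed

lemma psd_polar_iff_nonneg:
  fixes \<Phi> :: "'e::euclidean_space \<Rightarrow> real"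
  assumes \<Phi>: "quadratic_form \<Phi>" and e: "bij_betw e {0..<DIM('e)} Basis"
  shows "psd DIM('e) (\<lambda>a b. polar \<Phi> (e a) (e b)) \<longleftrightarrow> (\<forall>w. 0 \<le> \<Phi> w)"
proof -
  have "w = (\<Sum>a<DIM('e). (w \<bullet> e a) *\<^sub>R e a)" for w
  proof -
    have "w = (\<Sum>b\<in>Basis. (w \<bullet> b) *\<^sub>R b)"
      by (simp add: euclidean_representation)
    also have "\<dots> = (\<Sum>a<DIM('e). (w \<bullet> e a) *\<^sub>R e a)"
      unfolding lessThan_atLeast0 by (rule sum.reindex_bij_betw[OF e, symmetric])
    finally show ?thesis .
  qed
  then have "(\<forall>v. 0 \<le> \<Phi> (\<Sum>a<DIM('e). v a *\<^sub>R e a)) \<longleftrightarrow> (\<forall>w. 0 \<le> \<Phi> w)"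
    by metis
  then show ?thesis
    unfolding psd_def quadratic_form_sum_scaleR[OF \<Phi>, symmetric]
    by (simp add: polar_def add.commute)
qed

section \<open>Dines' theorem and the homogeneous S-lemma\<close>

lemma ex_complex_sqrt_components:
  fixes p q :: real
  obtains s t where "s\<^sup>2 - t\<^sup>2 = p" "2 * s * t = q" "s\<^sup>2 + t\<^sup>2 = sqrt (p\<^sup>2 + q\<^sup>2)"
proof -
  define z where "z = csqrt (Complex p q)"
  have "z\<^sup>2 = Complex p q" by (simp add: z_def)
  then have p: "Re z ^ 2 - Im z ^ 2 = p" and q: "2 * Re z * Im z = q"
    by (metis Re_power2 complex.sel(1), metis Im_power2 complex.sel(2))
  have "(Re z ^ 2 + Im z ^ 2)\<^sup>2 = (Re z ^ 2 - Im z ^ 2)\<^sup>2 + (2 * Re z * Im z)\<^sup>2"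
    by algebra
  then have "Re z ^ 2 + Im z ^ 2 = sqrt (p\<^sup>2 + q\<^sup>2)"
    using p q by (metis add_nonneg_nonneg real_sqrt_abs zero_le_power2 abs_of_nonneg)
  with p q that show thesis by blast
qed

lemma ex_isotropic_positive:
  assumes U: "quadratic_form U" and W: "quadratic_form W"
    and U_sum: "U d1 + U d2 = 0" and W_sum: "W d1 + W d2 > 0"
  shows "\<exists>z. U z = 0 \<and> W z > 0"
proof -
  define u where "u = U d1"
  define p where "p = polar U d1 d2"
  define \<rho> where "\<rho> = sqrt (p\<^sup>2 + u\<^sup>2)"
  show ?thesis
  proof (cases "\<rho> = 0")
    case True
    then have "U d1 = 0" "U d2 = 0" using U_sum by (simp_all add: \<rho>_def u_def)
    moreover have "W d1 > 0 \<or> W d2 > 0" using W_sum by linarith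
    ultimately show ?thesis by blast
  next
    case False
    then have "\<rho> > 0" by (simp add: \<rho>_def sum_power2_gt_zero_iff)
    have U_plane: "U (s *\<^sub>R d1 + t *\<^sub>R d2) = (s\<^sup>2 - t\<^sup>2) * u + (2 * s * t) * p" for s t
    proof -
      have "U d2 = - U d1" using U_sum by simp
      then show ?thesis by (simp add: quadratic_form_expand[OF U] u_def p_def algebra_simps)
    qed
    \<comment> \<open>The two isotropic directions of \<open>U\<close> in the plane come from the complex square
      roots of \<open>\<plusminus>(u \<i> - p)\<close>; their \<open>W\<close>-values add up to \<open>\<rho> (W d1 + W d2)\<close>.\<close>
    obtain s1 t1 where st1: "s1\<^sup>2 - t1\<^sup>2 = - p" "2 * s1 * t1 = u" "s1\<^sup>2 + t1\<^sup>2 = \<rho>"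
      using ex_complex_sqrt_components[of "- p" u] by (auto simp: \<rho>_def)
    obtain s2 t2 where st2: "s2\<^sup>2 - t2\<^sup>2 = p" "2 * s2 * t2 = - u" "s2\<^sup>2 + t2\<^sup>2 = \<rho>"
      using ex_complex_sqrt_components[of p "- u"] by (auto simp: \<rho>_def)
    define z1 where "z1 = s1 *\<^sub>R d1 + t1 *\<^sub>R d2"
    define z2 where "z2 = s2 *\<^sub>R d1 + t2 *\<^sub>R d2"
    have "U z1 = 0" "U z2 = 0"
      using st1 st2 by (simp_all add: z1_def z2_def U_plane)
    have "W z1 + W z2 = (s1\<^sup>2 + s2\<^sup>2) * W d1 + (2 * s1 * t1 + 2 * s2 * t2) * polar W d1 d2
        + (t1\<^sup>2 + t2\<^sup>2) * W d2"
      by (simp add: z1_def z2_def quadratic_form_expand[OF W] algebra_simps)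
    also have "\<dots> = \<rho> * (W d1 + W d2)"
    proof -
      have "s1\<^sup>2 + s2\<^sup>2 = \<rho>" "2 * s1 * t1 + 2 * s2 * t2 = 0" "t1\<^sup>2 + t2\<^sup>2 = \<rho>"
        using st1 st2 by linarith+
      then show ?thesis by (simp add: algebra_simps)
    qed
    finally have "W z1 + W z2 > 0"
      using \<open>\<rho> > 0\<close> W_sum by simp
    then show ?thesis
      using \<open>U z1 = 0\<close> \<open>U z2 = 0\<close> by (metis add_nonpos_nonpos not_less)
  qed
qed

lemma convex_joint_range_quadratic_forms:
  assumes F: "quadratic_form F" and G: "quadratic_form G"
  shows "convex (range (\<lambda>w. (F w, G w)))"
proof (rule convexI)
  fix x y and a b :: real
  assume "x \<in> range (\<lambda>w. (F w, G w))" "y \<in> range (\<lambda>w. (F w, G w))"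
    and ab: "0 \<le> a" "0 \<le> b" "a + b = 1"
  then obtain w1 w2 where x: "x = (F w1, G w1)" and y: "y = (F w2, G w2)" by blast
  define P1 where "P1 = a * F w1 + b * F w2"
  define P2 where "P2 = a * G w1 + b * G w2"
  have target: "a *\<^sub>R x + b *\<^sub>R y = (P1, P2)" by (simp add: x y P1_def P2_def)
  show "a *\<^sub>R x + b *\<^sub>R y \<in> range (\<lambda>w. (F w, G w))"
  proof (cases "P1 = 0 \<and> P2 = 0")
    case True
    then show ?thesis
      unfolding target using quadratic_form_zero[OF F] quadratic_form_zero[OF G]
      by (intro range_eqI[where x = 0]) simp
  next
    case False
    then have P_pos: "P1\<^sup>2 + P2\<^sup>2 > 0" by (simp add: sum_power2_gt_zero_iff)
    then have "P1\<^sup>2 + P2\<^sup>2 \<noteq> 0" by linarith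
    \<comment> \<open>\<open>(P1, P2)\<close> is the midpoint of the values at \<open>d1\<close> and \<open>d2\<close>; the forms \<open>U\<close> and \<open>W\<close> test
      whether a value lies on the ray through \<open>(P1, P2)\<close>.\<close>
    define d1 where "d1 = sqrt a *\<^sub>R w1 + sqrt b *\<^sub>R w2"
    define d2 where "d2 = sqrt a *\<^sub>R w1 + (- sqrt b) *\<^sub>R w2"
    have midpoint: "H d1 + H d2 = 2 * (a * H w1 + b * H w2)" if "quadratic_form H" for H
      using quadratic_form_expand[OF that, of "sqrt a" w1 "sqrt b" w2]
        quadratic_form_expand[OF that, of "sqrt a" w1 "- sqrt b" w2] ab
      by (simp add: d1_def d2_def algebra_simps)
    define U where "U w = P2 * F w + (- P1) * G w" for w
    define W where "W w = P1 * F w + P2 * G w" for w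
    have U: "quadratic_form U" and W: "quadratic_form W"
      unfolding U_def W_def by (rule quadratic_form_lincomb[OF F G])+
    have "U d1 + U d2 = P2 * (F d1 + F d2) - P1 * (G d1 + G d2)"
      by (simp add: U_def algebra_simps)
    then have "U d1 + U d2 = 0"
      by (simp add: midpoint[OF F, folded P1_def] midpoint[OF G, folded P2_def])
    moreover have "W d1 + W d2 = P1 * (F d1 + F d2) + P2 * (G d1 + G d2)"
      by (simp add: W_def algebra_simps)
    then have "W d1 + W d2 = 2 * (P1\<^sup>2 + P2\<^sup>2)"
      by (simp add: midpoint[OF F, folded P1_def] midpoint[OF G, folded P2_def] power2_eq_square)
    ultimately obtain z where "U z = 0" and Wz: "W z > 0"
      using ex_isotropic_positive[OF U W, of d1 d2] P_pos by auto
    then have "F z * (P1\<^sup>2 + P2\<^sup>2) = P1 * W z" "G z * (P1\<^sup>2 + P2\<^sup>2) = P2 * W z"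
      unfolding U_def W_def by algebra+
    then have "F z = P1 * W z / (P1\<^sup>2 + P2\<^sup>2)" "G z = P2 * W z / (P1\<^sup>2 + P2\<^sup>2)"
      using \<open>P1\<^sup>2 + P2\<^sup>2 \<noteq> 0\<close> by (simp_all add: eq_divide_eq)
    moreover define \<kappa> where "\<kappa> = W z / (P1\<^sup>2 + P2\<^sup>2)"
    ultimately have FG_z: "F z = \<kappa> * P1" "G z = \<kappa> * P2" by simp_all
    have "\<kappa> > 0" using Wz P_pos by (simp add: \<kappa>_def)
    define w where "w = (1 / sqrt \<kappa>) *\<^sub>R z"
    have "F w = P1" "G w = P2"
      using quadratic_form_scaleR[OF F] quadratic_form_scaleR[OF G] FG_z \<open>\<kappa> > 0\<close>
      by (simp_all add: w_def power_divide)
    then show ?thesis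
      unfolding target by (intro range_eqI[where x = w]) simp
  qed
qed

lemma nonneg_coeffs_of_nonneg_on_quadrant:
  fixes \<mu> \<nu> :: real
  assumes "\<And>s t. s > 0 \<Longrightarrow> t > 0 \<Longrightarrow> 0 \<le> \<mu> * s + \<nu> * t"
  shows "0 \<le> \<mu>" "0 \<le> \<nu>"
proof -
  have "((\<lambda>t. \<mu> * 1 + \<nu> * t) \<longlongrightarrow> \<mu>) (at_right 0)"
    by (auto intro!: tendsto_eq_intros)
  moreover have "\<forall>\<^sub>F t in at_right 0. 0 \<le> \<mu> * 1 + \<nu> * t"
    using eventually_at_right_less by (rule eventually_mono) (rule assms, simp_all)
  ultimately show "0 \<le> \<mu>" by (rule tendsto_lowerbound) simp
  have "((\<lambda>s. \<mu> * s + \<nu> * 1) \<longlongrightarrow> \<nu>) (at_right 0)"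
    by (auto intro!: tendsto_eq_intros)
  moreover have "\<forall>\<^sub>F s in at_right 0. 0 \<le> \<mu> * s + \<nu> * 1"
    using eventually_at_right_less by (rule eventually_mono) (rule assms, simp_all)
  ultimately show "0 \<le> \<nu>" by (rule tendsto_lowerbound) simp
qed

lemma S_lemma_homogeneous:
  assumes F: "quadratic_form F" and G: "quadratic_form G"
    and slater: "G w0 < 0" and hyp: "\<And>w. G w < 0 \<Longrightarrow> F w \<le> 0"
  shows "\<exists>l\<ge>0. \<forall>w. F w \<le> l * G w"
proof -
  define K where "K = range (\<lambda>w. (F w, G w))"
  define C where "C = {p :: real \<times> real. (1, 0) \<bullet> p > 0} \<inter> {p. (0, 1) \<bullet> p < 0}"
  have "convex K"
    unfolding K_def by (rule convex_joint_range_quadratic_forms[OF F G])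
  moreover have "convex C"
    unfolding C_def by (intro convex_Int convex_halfspace_gt convex_halfspace_lt)
  moreover have "K \<noteq> {}" "(1, -1) \<in> C"
    by (simp_all add: K_def C_def inner_Pair)
  moreover have "K \<inter> C = {}"
    using hyp by (force simp: K_def C_def inner_Pair)
  ultimately obtain a \<beta> where "a \<noteq> 0" and K_below: "\<forall>p\<in>K. a \<bullet> p \<le> \<beta>"
    and C_above: "\<forall>p\<in>C. \<beta> \<le> a \<bullet> p"
    using separating_hyperplane_sets[of K C] by blast
  obtain \<mu> \<nu> where a: "a = (\<mu>, \<nu>)" by fastforce
  have below: "\<mu> * F w + \<nu> * G w \<le> \<beta>" for w
    using K_below by (auto simp: K_def a inner_Pair)
  have above: "\<beta> \<le> \<mu> * s + (- \<nu>) * t" if "s > 0" "t > 0" for s t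
    using C_above[rule_format, of "(s, - t)"] that by (simp add: C_def a inner_Pair)
  have "0 \<le> \<beta>"
    using below[of 0] by (simp add: quadratic_form_zero[OF F] quadratic_form_zero[OF G])
  \<comment> \<open>\<open>K\<close> is a cone, so the separating line passes through the origin.\<close>
  have cone: "\<mu> * F w + \<nu> * G w \<le> 0" for w
  proof (rule ccontr)
    assume "\<not> ?thesis"
    then have pos: "\<mu> * F w + \<nu> * G w > 0" by simp
    define c where "c = sqrt ((\<beta> + 1) / (\<mu> * F w + \<nu> * G w))"
    have "\<mu> * F (c *\<^sub>R w) + \<nu> * G (c *\<^sub>R w) = c\<^sup>2 * (\<mu> * F w + \<nu> * G w)"
      by (simp add: quadratic_form_scaleR[OF F] quadratic_form_scaleR[OF G] algebra_simps)
    also have "\<dots> = \<beta> + 1"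
      using pos \<open>0 \<le> \<beta>\<close> by (simp add: c_def)
    finally show False
      using below[of "c *\<^sub>R w"] by simp
  qed
  have "0 \<le> \<mu>" "0 \<le> - \<nu>"
    using nonneg_coeffs_of_nonneg_on_quadrant[of \<mu> "- \<nu>"] above \<open>0 \<le> \<beta>\<close> by force+
  have "\<mu> \<noteq> 0"
  proof
    assume "\<mu> = 0"
    with \<open>a \<noteq> 0\<close> \<open>0 \<le> - \<nu>\<close> have "\<nu> < 0" by (simp add: a zero_prod_def)
    with slater have "\<nu> * G w0 > 0" by (simp add: mult_neg_neg)
    with cone[of w0] \<open>\<mu> = 0\<close> show False by simp
  qed
  with \<open>0 \<le> \<mu>\<close> have "\<mu> > 0" by simp
  show ?thesis
  proof (intro exI[of _ "- \<nu> / \<mu>"] conjI allI)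
    show "0 \<le> - \<nu> / \<mu>"
      using \<open>0 \<le> - \<nu>\<close> \<open>\<mu> > 0\<close> by (simp add: divide_nonpos_pos)
    show "F w \<le> - \<nu> / \<mu> * G w" for w
      using cone[of w] \<open>\<mu> > 0\<close> by (simp add: field_simps)
  qed
qed

section \<open>Quadratic functions and the S-lemma\<close>

definition quadratic_fun :: "('a::real_vector \<Rightarrow> real) \<Rightarrow> bool" where
  "quadratic_fun f \<longleftrightarrow> (\<exists>B L c. bilinear B \<and> linear L \<and> (\<forall>x. f x = B x x + L x + c))"

lemma bilinear_zero: "bilinear (\<lambda>x y. 0 :: real)"
  by (simp add: bilinear_def linear_zero)

lemma quadratic_fun_lincomb:
  assumes "quadratic_fun f" "quadratic_fun g"
  shows "quadratic_fun (\<lambda>x. a * f x + b * g x)"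
proof -
  obtain B1 L1 c1 where "bilinear B1" "linear L1" "\<And>x. f x = B1 x x + L1 x + c1"
    using assms(1) unfolding quadratic_fun_def by blast
  moreover obtain B2 L2 c2 where "bilinear B2" "linear L2" "\<And>x. g x = B2 x x + L2 x + c2"
    using assms(2) unfolding quadratic_fun_def by blast
  ultimately show ?thesis
    unfolding quadratic_fun_def
    by (intro exI[of _ "\<lambda>x y. a * B1 x y + b * B2 x y"] exI[of _ "\<lambda>x. a * L1 x + b * L2 x"]
        exI[of _ "a * c1 + b * c2"])
      (simp add: bilinear_real_lincomb linear_real_lincomb algebra_simps)
qed

lemma quadratic_fun_const: "quadratic_fun (\<lambda>x. c)"
  unfolding quadratic_fun_def
  by (intro exI[of _ "\<lambda>x y. 0"] exI[of _ "\<lambda>x. 0"] exI[of _ c]) (simp add: bilinear_zero linear_zero)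

lemma quadratic_fun_add: "quadratic_fun f \<Longrightarrow> quadratic_fun g \<Longrightarrow> quadratic_fun (\<lambda>x. f x + g x)"
  using quadratic_fun_lincomb[of f g 1 1] by simp

lemma quadratic_fun_diff: "quadratic_fun f \<Longrightarrow> quadratic_fun g \<Longrightarrow> quadratic_fun (\<lambda>x. f x - g x)"
  using quadratic_fun_lincomb[of f g 1 "-1"] by simp

lemma quadratic_fun_cmult: "quadratic_fun f \<Longrightarrow> quadratic_fun (\<lambda>x. c * f x)"
  using quadratic_fun_lincomb[of f "\<lambda>x. 0" c 0] by (simp add: quadratic_fun_const)

lemma quadratic_fun_sum:
  "finite S \<Longrightarrow> (\<And>i. i \<in> S \<Longrightarrow> quadratic_fun (f i)) \<Longrightarrow> quadratic_fun (\<lambda>x. \<Sum>i\<in>S. f i x)"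
  by (induction S rule: finite_induct) (simp_all add: quadratic_fun_const quadratic_fun_add)

definition affine_fun :: "('a::real_vector \<Rightarrow> real) \<Rightarrow> bool" where
  "affine_fun f \<longleftrightarrow> (\<exists>L c. linear L \<and> (\<forall>x. f x = L x + c))"

lemma quadratic_fun_mult:
  assumes "affine_fun f" "affine_fun g"
  shows "quadratic_fun (\<lambda>x. f x * g x)"
proof -
  obtain L1 c1 where L1: "linear L1" and f: "\<And>x. f x = L1 x + c1"
    using assms(1) unfolding affine_fun_def by blast
  obtain L2 c2 where L2: "linear L2" and g: "\<And>x. g x = L2 x + c2"
    using assms(2) unfolding affine_fun_def by blast
  have "bilinear (\<lambda>x y. L1 x * L2 y)"
    unfolding bilinear_def linear_iff
    by (simp add: linear_add[OF L1] linear_add[OF L2] linear_scale[OF L1] linear_scale[OF L2]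
        algebra_simps)
  then show ?thesis
    unfolding quadratic_fun_def
    by (intro exI[of _ "\<lambda>x y. L1 x * L2 y"] exI[of _ "\<lambda>x. c2 * L1 x + c1 * L2 x"]
        exI[of _ "c1 * c2"])
      (simp add: L1 L2 f g linear_real_lincomb algebra_simps)
qed

lemma quadratic_fun_of_affine: "affine_fun f \<Longrightarrow> quadratic_fun f"
  unfolding affine_fun_def quadratic_fun_def using bilinear_zero by fastforce

lemma affine_fun_matrix_entry:
  fixes P :: "'a::real_vector \<Rightarrow> real^'n^'m"
  assumes "linear P"
  shows "affine_fun (\<lambda>D. (M + P D) $ i $ j)"
proof -
  have "linear (\<lambda>D. P D $ i $ j)"
    unfolding linear_iff by (simp add: linear_add[OF assms] linear_scale[OF assms])
  then show ?thesis
    unfolding affine_fun_def by (intro exI[of _ "\<lambda>D. P D $ i $ j"] exI[of _ "M $ i $ j"]) simp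
qed

text \<open>For \<open>f x = B x x + L x + c\<close> this is \<open>B x x + t L x + t\<^sup>2 c\<close>: the even part of \<open>f\<close>
  gives \<open>B x x + c\<close> and the odd part gives \<open>L x\<close>, so no representation of \<open>f\<close> has to be chosen.\<close>
definition homogenization :: "('a::real_vector \<Rightarrow> real) \<Rightarrow> 'a \<times> real \<Rightarrow> real" where
  "homogenization f w =
     (f (fst w) + f (- fst w)) / 2 - f 0 + snd w * ((f (fst w) - f (- fst w)) / 2) + (snd w)\<^sup>2 * f 0"

lemma homogenization_eq:
  assumes "bilinear B" "linear L" "\<And>x. f x = B x x + L x + c"
  shows "homogenization f (x, t) = B x x + t * L x + t\<^sup>2 * c"
  by (simp add: homogenization_def assms bilinear_lneg[OF assms(1)] bilinear_rneg[OF assms(1)]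
      linear_neg[OF assms(2)] linear_0[OF assms(2)] bilinear_lzero[OF assms(1)] algebra_simps)

lemma homogenization_one: "homogenization f (x, 1) = f x"
  by (simp add: homogenization_def field_simps)

lemma homogenization_diff: "homogenization (\<lambda>y. f y - g y) w = homogenization f w - homogenization g w"
  by (simp add: homogenization_def algebra_simps add_divide_distrib diff_divide_distrib)

lemma homogenization_cmult: "homogenization (\<lambda>y. c * f y) w = c * homogenization f w"
  by (simp add: homogenization_def algebra_simps add_divide_distrib diff_divide_distrib)

lemma homogenization_const: "homogenization (\<lambda>y. c) w = c * (snd w)\<^sup>2"
  by (simp add: homogenization_def)

lemma homogenization_sum:
  "homogenization (\<lambda>y. \<Sum>i\<in>S. f i y) w = (\<Sum>i\<in>S. homogenization (f i) w)"
  by (simp add: homogenization_def sum.distrib sum_subtractf flip: sum_divide_distrib sum_distrib_left)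

lemma quadratic_form_homogenization:
  assumes "quadratic_fun f"
  shows "quadratic_form (homogenization f)"
proof -
  obtain B L c where f: "bilinear B" "linear L" "\<And>x. f x = B x x + L x + c"
    using assms quadratic_fun_def by metis
  define \<beta> where "\<beta> v w = B (fst v) (fst w) + snd v * L (fst w) + snd v * snd w * c" for v w
  have "bilinear \<beta>"
    unfolding bilinear_def linear_iff \<beta>_def
    by (simp add: bilinear_ladd[OF f(1)] bilinear_radd[OF f(1)] bilinear_lmul[OF f(1)]
        bilinear_rmul[OF f(1)] linear_add[OF f(2)] linear_scale[OF f(2)] algebra_simps)
  moreover have "homogenization f w = \<beta> w w" for w
    using homogenization_eq[OF f, of "fst w" "snd w"] by (simp add: \<beta>_def power2_eq_square)
  ultimately show ?thesis
    unfolding quadratic_form_def by blast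
qed

lemma homogenization_scaleR:
  assumes "quadratic_fun f" "t \<noteq> 0"
  shows "homogenization f (x, t) = t\<^sup>2 * f ((1 / t) *\<^sub>R x)"
proof -
  obtain B L c where f: "bilinear B" "linear L" "\<And>x. f x = B x x + L x + c"
    using assms quadratic_fun_def by metis
  have "f ((1 / t) *\<^sub>R x) = (1 / t) * (1 / t) * B x x + (1 / t) * L x + c"
    by (simp add: f(3) bilinear_lmul[OF f(1)] bilinear_rmul[OF f(1)] linear_scale[OF f(2)])
  then show ?thesis
    using assms(2) by (simp add: homogenization_eq[OF f] power2_eq_square field_simps)
qed

lemma homogenization_tendsto:
  assumes "quadratic_fun f"
  shows "((\<lambda>t. homogenization f (x, t)) \<longlongrightarrow> homogenization f (x, 0)) (at_right 0)"
proof -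
  obtain B L c where f: "bilinear B" "linear L" "\<And>x. f x = B x x + L x + c"
    using assms quadratic_fun_def by metis
  show ?thesis
    unfolding homogenization_eq[OF f] by (intro tendsto_intros)
qed

lemma S_lemma:
  assumes f: "quadratic_fun f" and g: "quadratic_fun g" and slater: "g x0 < 0"
  shows "(\<forall>x. g x \<le> 0 \<longrightarrow> f x \<le> 0) \<longleftrightarrow>
         (\<exists>l\<ge>0. \<forall>w. homogenization f w \<le> l * homogenization g w)"
proof
  assume hyp: "\<forall>x. g x \<le> 0 \<longrightarrow> f x \<le> 0"
  have off_axis: "homogenization f (x, t) \<le> 0" if "t \<noteq> 0" "homogenization g (x, t) < 0" for x t
  proof -
    have "g ((1 / t) *\<^sub>R x) < 0"
      using that homogenization_scaleR[OF g] by (simp add: mult_less_0_iff)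
    then show ?thesis
      using hyp that(1) homogenization_scaleR[OF f] by (simp add: mult_nonneg_nonpos)
  qed
  \<comment> \<open>On the hyperplane \<open>t = 0\<close> the inequality follows by continuity from \<open>t > 0\<close>.\<close>
  have "homogenization f w \<le> 0" if neg: "homogenization g w < 0" for w
  proof (cases w)
    case (Pair x t)
    show ?thesis
    proof (cases "t = 0")
      case True
      have "\<forall>\<^sub>F s in at_right 0. homogenization g (x, s) < 0"
        using order_tendstoD(2)[OF homogenization_tendsto[OF g]] neg Pair True by simp
      then have "\<forall>\<^sub>F s in at_right 0. homogenization f (x, s) \<le> 0"
        using eventually_at_right_less[of "0::real"]
        by eventually_elim (simp add: off_axis)
      then have "homogenization f (x, 0) \<le> 0"
        by (rule tendsto_upperbound[OF homogenization_tendsto[OF f]]) simp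
      then show ?thesis using Pair True by simp
    qed (use off_axis neg Pair in simp)
  qed
  moreover have "homogenization g (x0, 1) < 0"
    using slater by (simp add: homogenization_one)
  ultimately show "\<exists>l\<ge>0. \<forall>w. homogenization f w \<le> l * homogenization g w"
    by (rule S_lemma_homogeneous[OF quadratic_form_homogenization[OF f]
          quadratic_form_homogenization[OF g], rotated])
next
  assume "\<exists>l\<ge>0. \<forall>w. homogenization f w \<le> l * homogenization g w"
  then obtain l where "l \<ge> 0" "\<And>x. f x \<le> l * g x"
    by (metis homogenization_one)
  then show "\<forall>x. g x \<le> 0 \<longrightarrow> f x \<le> 0"
    by (meson dual_order.trans mult_nonneg_nonpos)
qed

text \<open>The constant \<open>\<beta>\<close> homogenizes to \<open>\<beta> t\<^sup>2\<close>, whose polar matrix is \<open>snd (e a) * snd (e b)\<close>.\<close>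
lemma S_lemma_lmi:
  fixes g :: "'a::euclidean_space \<Rightarrow> real" and \<phi> :: "'n::finite \<Rightarrow> 'a \<Rightarrow> real" and x :: "real^'n"
  assumes g: "quadratic_fun g" and \<phi>: "\<And>j. quadratic_fun (\<phi> j)" and slater: "g y0 < 0"
    and e: "bij_betw e {0..<DIM('a \<times> real)} Basis"
  shows "(\<forall>y. g y \<le> 0 \<longrightarrow> (\<Sum>j\<in>UNIV. x $ j * \<phi> j y) \<le> \<beta>) \<longleftrightarrow>
    (\<exists>l\<ge>0. psd DIM('a \<times> real) (\<lambda>a b. \<beta> * (snd (e a) * snd (e b))
        + (\<Sum>j\<in>UNIV. x $ j * - polar (homogenization (\<phi> j)) (e a) (e b))
        + l * polar (homogenization g) (e a) (e b)))"
proof -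
  define f where "f y = (\<Sum>j\<in>UNIV. x $ j * \<phi> j y) - \<beta>" for y
  have f: "quadratic_fun f"
    unfolding f_def by (intro quadratic_fun_diff quadratic_fun_sum quadratic_fun_cmult \<phi>
        quadratic_fun_const finite)
  have lmi: "(\<forall>w. homogenization f w \<le> l * homogenization g w) \<longleftrightarrow>
    psd DIM('a \<times> real) (\<lambda>a b. \<beta> * (snd (e a) * snd (e b))
        + (\<Sum>j\<in>UNIV. x $ j * - polar (homogenization (\<phi> j)) (e a) (e b))
        + l * polar (homogenization g) (e a) (e b))" for l
  proof -
    define h where "h y = l * g y - f y" for y
    have "quadratic_fun h"
      unfolding h_def by (intro quadratic_fun_diff quadratic_fun_cmult f g)
    have hom_h: "homogenization h = (\<lambda>w. l * homogenization g w -
        ((\<Sum>j\<in>UNIV. x $ j * homogenization (\<phi> j) w) - \<beta> * (snd w)\<^sup>2))"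
      unfolding h_def f_def
      by (simp add: fun_eq_iff homogenization_diff homogenization_cmult homogenization_sum
          homogenization_const)
    have "(\<forall>w. homogenization f w \<le> l * homogenization g w) \<longleftrightarrow> (\<forall>w. 0 \<le> homogenization h w)"
      unfolding h_def by (simp add: homogenization_diff homogenization_cmult)
    also have "\<dots> \<longleftrightarrow> psd DIM('a \<times> real) (\<lambda>a b. polar (homogenization h) (e a) (e b))"
      by (rule psd_polar_iff_nonneg[OF quadratic_form_homogenization[OF \<open>quadratic_fun h\<close>] e,
            symmetric])
    also have "(\<lambda>a b. polar (homogenization h) (e a) (e b)) = (\<lambda>a b. \<beta> * (snd (e a) * snd (e b))
        + (\<Sum>j\<in>UNIV. x $ j * - polar (homogenization (\<phi> j)) (e a) (e b))
        + l * polar (homogenization g) (e a) (e b))"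
      unfolding hom_h polar_diff polar_cmult polar_sum polar_snd_square
      by (simp add: fun_eq_iff sum_negf algebra_simps)
    finally show ?thesis .
  qed
  have "(\<forall>y. g y \<le> 0 \<longrightarrow> (\<Sum>j\<in>UNIV. x $ j * \<phi> j y) \<le> \<beta>) \<longleftrightarrow> (\<forall>y. g y \<le> 0 \<longrightarrow> f y \<le> 0)"
    by (simp add: f_def)
  also have "\<dots> \<longleftrightarrow> (\<exists>l\<ge>0. \<forall>w. homogenization f w \<le> l * homogenization g w)"
    by (rule S_lemma[OF f g slater])
  finally show ?thesis
    by (simp only: lmi)
qed

section \<open>Semidefinite representations\<close>

definition sdp_representable :: "nat \<Rightarrow> nat \<Rightarrow> nat \<Rightarrow> (real^'n) set \<Rightarrow> bool" where
  "sdp_representable p s bound R \<longleftrightarrow> (\<exists>N a0 ax az m F0 Fx Fz. (\<forall>t<s. m t \<le> bound) \<and>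
     (\<forall>x. x \<in> R \<longleftrightarrow> (\<exists>z. sdp_constraints N p s a0 ax az m F0 Fx Fz x z)))"

lemma sdp_representable_polyhedron:
  "sdp_representable p s bound {x. \<forall>i<p. a i \<bullet> x \<le> \<beta> i}"
  unfolding sdp_representable_def
proof (intro exI conjI allI)
  show "x \<in> {x. \<forall>i<p. a i \<bullet> x \<le> \<beta> i} \<longleftrightarrow>
      (\<exists>z. sdp_constraints 0 p s (\<lambda>i. - \<beta> i) a (\<lambda>i l. 0) (\<lambda>t. 0) F0 Fx Fz x z)" for x F0 Fx Fz
    by (simp add: sdp_constraints_def aff_scalar_def psd_def)
qed simp

lemma all_less_add_iff: "(\<forall>i < m + (n::nat). P i) \<longleftrightarrow> (\<forall>i < m. P i) \<and> (\<forall>i < n. P (m + i))"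
proof
  assume H: "(\<forall>i < m. P i) \<and> (\<forall>i < n. P (m + i))"
  show "\<forall>i < m + n. P i"
  proof (intro allI impI)
    fix i assume "i < m + n"
    show "P i"
    proof (cases "i < m")
      case False
      then obtain d where "i = m + d" using le_Suc_ex[of m i] by auto
      with H \<open>i < m + n\<close> show ?thesis by simp
    qed (use H in simp)
  qed
qed simp

lemma sum_lessThan_delta_mult:
  fixes z :: "nat \<Rightarrow> 'a::comm_semiring_0"
  assumes "t < N"
  shows "(\<Sum>l<N. z l * (if l = t then c else 0)) = z t * c"
proof -
  have "(\<Sum>l<N. z l * (if l = t then c else 0)) = (\<Sum>l\<in>{..<N}. if l = t then z l * c else 0)"
    by (rule sum.cong) simp_all
  also have "\<dots> = z t * c"
    using assms by (subst sum.delta) simp_all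
  finally show ?thesis .
qed

lemma sdp_representable_lmi:
  assumes bound: "\<And>t. t < s \<Longrightarrow> m t \<le> bound"
    and R: "\<And>x. x \<in> R \<longleftrightarrow> (\<forall>i<p. a i \<bullet> x \<le> \<beta> i) \<and>
      (\<forall>t<s. \<exists>l\<ge>0. psd (m t) (\<lambda>u v. C t u v + (\<Sum>j\<in>UNIV. x $ j * \<Phi> t j u v) + l * G t u v))"
  shows "sdp_representable (p + s) s bound R"
proof -
  define a0 where "a0 i = (if i < p then - \<beta> i else 0)" for i
  define ax where "ax i = (if i < p then a i else 0)" for i
  define az where "az i l = (if i < p then 0 else if l = i - p then -1 else 0 :: real)" for i l
  define Fz where "Fz t l u v = (if l = t then G t u v else 0)" for t l u v
  have scalar: "aff_scalar s (a0 i) (ax i) (az i) x z =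
      (if i < p then a i \<bullet> x - \<beta> i else - z (i - p))" if "i < p + s" for i x z
  proof (cases "i < p")
    case False
    then show ?thesis
      using that sum_lessThan_delta_mult[of "i - p" s z "-1"]
      by (simp add: aff_scalar_def a0_def ax_def az_def mult.commute)
  qed (simp add: aff_scalar_def a0_def ax_def az_def)
  have matrix: "aff_matrix s (C t) (\<Phi> t) (Fz t) x z =
      (\<lambda>u v. C t u v + (\<Sum>j\<in>UNIV. x $ j * \<Phi> t j u v) + z t * G t u v)" if "t < s" for t x z
    using that by (simp add: aff_matrix_def Fz_def sum_lessThan_delta_mult)
  have "sdp_constraints s (p + s) s a0 ax az m C \<Phi> Fz x z \<longleftrightarrow> (\<forall>i<p. a i \<bullet> x \<le> \<beta> i) \<and>
      (\<forall>t<s. 0 \<le> z t \<and> psd (m t) (\<lambda>u v. C t u v + (\<Sum>j\<in>UNIV. x $ j * \<Phi> t j u v) + z t * G t u v))"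
    for x z
    unfolding sdp_constraints_def all_less_add_iff by (simp add: scalar matrix) blast
  then have "x \<in> R \<longleftrightarrow> (\<exists>z. sdp_constraints s (p + s) s a0 ax az m C \<Phi> Fz x z)" for x
    by (simp add: R choice_iff')
  with bound show ?thesis
    unfolding sdp_representable_def by blast
qed

lemma INF_projection:
  assumes "\<And>x. x \<in> R \<longleftrightarrow> (\<exists>z. S x z)"
  shows "(INF x\<in>R. f x) = (INF xz\<in>{(x, z). S x z}. f (fst xz))"
proof -
  have "R = fst ` {(x, z). S x z}"
    using assms by force
  then show ?thesis
    by (simp add: image_comp o_def)
qed

section \<open>The robust two-step problem\<close>

lemma subspace_ex_linear_range:
  fixes W :: "'a::euclidean_space set"
  assumes "subspace W"
  obtains P :: "'a \<Rightarrow> 'a" where "linear P" "range P = W"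
proof -
  obtain B where B: "B \<subseteq> W" "independent B" "W \<subseteq> span B"
    by (rule basis_exists)
  obtain P :: "'a \<Rightarrow> 'a" where "linear P" "range P = span (id ` B)"
    using linear_independent_extend_subspace[OF B(2)] by blast
  with span_subspace[OF B(1,3) assms] that show thesis by simp
qed

lemma matrix_two_steps_agree_iff:
  fixes A B :: "'a::comm_ring_1^'n^'n"
  shows "(A *v x = B *v x \<and> (A ** A) *v x = (B ** B) *v x) \<longleftrightarrow>
         ((A - B) *v x = 0 \<and> (A - B) *v (B *v x) = 0)"
proof -
  have "(A ** A) *v x = A *v (A *v x)" "(B ** B) *v x = B *v (B *v x)"
    by (simp_all add: matrix_vector_mul_assoc)
  then show ?thesis
    by (auto simp: matrix_vector_mult_diff_rdistrib)
qed

definition consistent_perturbations :: "real^'n^'n \<Rightarrow> (nat \<Rightarrow> real^'n) \<Rightarrow> nat \<Rightarrow> (real^'n^'n) set"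
  where "consistent_perturbations Astar xs k = {D. \<forall>j<k. D *v xs j = 0 \<and> D *v (Astar *v xs j) = 0}"

lemma subspace_consistent_perturbations: "subspace (consistent_perturbations Astar xs k)"
  unfolding subspace_def consistent_perturbations_def
  by (auto simp: matrix_vector_mult_add_rdistrib scaleR_matrix_vector_assoc[symmetric])

lemma Uk_eq_image:
  assumes "range P = consistent_perturbations Astar xs k"
  shows "Uk q Astar xs k = (\<lambda>D. Astar + P D) ` {D. q (Astar + P D) \<le> 0}"
proof -
  have "A \<in> Uk q Astar xs k \<longleftrightarrow> q A \<le> 0 \<and> A - Astar \<in> range P" for A
    unfolding Uk_def U0_def assms consistent_perturbations_def
    by (simp add: matrix_two_steps_agree_iff)
  then show ?thesis
    by (auto simp: image_iff algebra_simps)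
qed

lemma Uk_eq_singleton:
  assumes q: "strictly_convex q" and Astar: "Astar \<in> U0 q"
    and P: "linear P" "range P = consistent_perturbations Astar xs k"
    and no_interior: "\<And>D. 0 \<le> q (Astar + P D)"
  shows "Uk q Astar xs k = {Astar}"
proof -
  have collapse: "Astar + P D = Astar" if "q (Astar + P D) \<le> 0" for D
  proof (rule ccontr)
    assume ne: "Astar + P D \<noteq> Astar"
    have "q ((1 - 1/2) *\<^sub>R (Astar + P D) + (1/2) *\<^sub>R Astar)
        < (1 - 1/2) * q (Astar + P D) + (1/2) * q Astar"
      using q ne unfolding strictly_convex_def
      by (elim allE[of _ "Astar + P D"] allE[of _ Astar] allE[of _ "1/2"]) simp
    also have "\<dots> \<le> 0"
      using that Astar by (simp add: U0_def)
    also have "(1 - 1/2) *\<^sub>R (Astar + P D) + (1/2) *\<^sub>R Astar = Astar + P ((1/2) *\<^sub>R D)"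
      by (simp add: linear_scale[OF P(1)] scaleR_add_right flip: scaleR_add_left)
    finally show False
      using no_interior not_less by blast
  qed
  have "Astar = Astar + P 0" "q (Astar + P 0) \<le> 0"
    using Astar by (simp_all add: U0_def linear_0[OF P(1)])
  then show ?thesis
    unfolding Uk_eq_image[OF P(2)] using collapse by blast
qed

definition robust_row :: "nat \<Rightarrow> (nat \<Rightarrow> real^'n) \<Rightarrow> real^'n^'n \<Rightarrow> nat \<Rightarrow> real^'n" where
  "robust_row r h A t = (if t < r then h t v* A else h (t - r) v* (A ** A))"

definition robust_rhs :: "nat \<Rightarrow> (nat \<Rightarrow> real) \<Rightarrow> nat \<Rightarrow> real" where
  "robust_rhs r b t = (if t < r then b t else b (t - r))"

lemma robust_feasible_iff:
  "x \<in> robust_feasible r h b q Astar xs k \<longleftrightarrow> (\<forall>i<r. h i \<bullet> x \<le> b i) \<and>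
     (\<forall>t<2 * r. \<forall>A\<in>Uk q Astar xs k. robust_row r h A t \<bullet> x \<le> robust_rhs r b t)"
  unfolding robust_feasible_def polyS_def mult_2 all_less_add_iff
  by (auto simp: robust_row_def robust_rhs_def dot_lmul_matrix)

lemma robust_constraint_iff:
  assumes "range P = consistent_perturbations Astar xs k"
  shows "(\<forall>A\<in>Uk q Astar xs k. robust_row r h A t \<bullet> x \<le> robust_rhs r b t) \<longleftrightarrow>
    (\<forall>D. q (Astar + P D) \<le> 0 \<longrightarrow>
      (\<Sum>j\<in>UNIV. x $ j * robust_row r h (Astar + P D) t $ j) \<le> robust_rhs r b t)"
  unfolding Uk_eq_image[OF assms] by (simp add: inner_vec_def mult.commute)

lemma quadratic_fun_quadratic_affine:
  fixes P :: "'a::real_vector \<Rightarrow> real^'n^'n"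
  assumes "is_quadratic q" "linear P"
  shows "quadratic_fun (\<lambda>D. q (M + P D))"
proof -
  obtain Q L c where q: "\<And>A. q A =
      (\<Sum>i\<in>UNIV. \<Sum>j\<in>UNIV. \<Sum>k\<in>UNIV. \<Sum>l\<in>UNIV. Q i j k l * (A$i$j) * (A$k$l))
      + (\<Sum>i\<in>UNIV. \<Sum>j\<in>UNIV. L i j * (A$i$j)) + c"
    using assms(1) unfolding is_quadratic_def by blast
  show ?thesis
    unfolding q mult.assoc
    by (intro quadratic_fun_add quadratic_fun_sum quadratic_fun_cmult quadratic_fun_mult
        quadratic_fun_of_affine affine_fun_matrix_entry assms(2) quadratic_fun_const finite)
qed

lemma quadratic_fun_robust_row:
  fixes P :: "'a::real_vector \<Rightarrow> real^'n^'n"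
  assumes "linear P"
  shows "quadratic_fun (\<lambda>D. robust_row r h (M + P D) t $ j)"
proof -
  have row: "robust_row r h A t $ j = (if t < r then \<Sum>a\<in>UNIV. h t $ a * A $ a $ j
      else \<Sum>a\<in>UNIV. \<Sum>c\<in>UNIV. h (t - r) $ a * (A $ a $ c * A $ c $ j))" for A
    by (simp add: robust_row_def vector_matrix_mult_def matrix_matrix_mult_def sum_distrib_left)
  show ?thesis
    unfolding row
    by (cases "t < r") (simp only: if_True if_False,
        intro quadratic_fun_sum quadratic_fun_cmult quadratic_fun_mult quadratic_fun_of_affine
        affine_fun_matrix_entry assms finite)+
qed

lemma robust_feasible_sdp_representable_slater:
  fixes P :: "real^'n^'n \<Rightarrow> real^'n^'n"
  assumes q: "is_quadratic q" and P: "linear P" "range P = consistent_perturbations Astar xs k"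
    and slater: "q (Astar + P D0) < 0"
  shows "sdp_representable (3 * r) (2 * r) (CARD('n)\<^sup>2 + 1) (robust_feasible r h b q Astar xs k)"
proof -
  obtain e :: "nat \<Rightarrow> (real^'n^'n) \<times> real" where e: "bij_betw e {0..<DIM((real^'n^'n) \<times> real)} Basis"
    using ex_bij_betw_nat_finite[of "Basis :: ((real^'n^'n) \<times> real) set"] by auto
  have lmi: "(\<forall>A\<in>Uk q Astar xs k. robust_row r h A t \<bullet> x \<le> robust_rhs r b t) \<longleftrightarrow>
    (\<exists>l\<ge>0. psd DIM((real^'n^'n) \<times> real) (\<lambda>u v. robust_rhs r b t * (snd (e u) * snd (e v))
      + (\<Sum>j\<in>UNIV. x $ j *
          - polar (homogenization (\<lambda>D. robust_row r h (Astar + P D) t $ j)) (e u) (e v))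
      + l * polar (homogenization (\<lambda>D. q (Astar + P D))) (e u) (e v)))" for t x
    unfolding robust_constraint_iff[OF P(2)]
    by (rule S_lemma_lmi[OF quadratic_fun_quadratic_affine[OF q P(1)]
          quadratic_fun_robust_row[OF P(1)] slater e])
  have "sdp_representable (r + 2 * r) (2 * r) (CARD('n)\<^sup>2 + 1) (robust_feasible r h b q Astar xs k)"
    by (rule sdp_representable_lmi[where m = "\<lambda>_. DIM((real^'n^'n) \<times> real)"
        and C = "\<lambda>t u v. robust_rhs r b t * (snd (e u) * snd (e v))"
        and \<Phi> = "\<lambda>t j u v.
          - polar (homogenization (\<lambda>D. robust_row r h (Astar + P D) t $ j)) (e u) (e v)"
        and G = "\<lambda>t u v. polar (homogenization (\<lambda>D. q (Astar + P D))) (e u) (e v)"])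
      (simp_all add: power2_eq_square robust_feasible_iff lmi)
  moreover have "3 * r = r + 2 * r" by simp
  ultimately show ?thesis by (simp only:)
qed

lemma robust_feasible_sdp_representable_certain:
  assumes "Uk q Astar xs k = {Astar}"
  shows "sdp_representable (3 * r) s bound (robust_feasible r h b q Astar xs k)"
proof -
  have "robust_feasible r h b q Astar xs k = {x. \<forall>i<r + 2 * r.
      (if i < r then h i else robust_row r h Astar (i - r)) \<bullet> x \<le>
      (if i < r then b i else robust_rhs r b (i - r))}"
    unfolding all_less_add_iff by (simp add: set_eq_iff robust_feasible_iff assms)
  moreover have "3 * r = r + 2 * r" by simp
  ultimately show ?thesis
    by (simp only: sdp_representable_polyhedron)
qed

theorem theorem9:
  fixes r k :: nat
    and h :: "nat \<Rightarrow> real^'n" and b :: "nat \<Rightarrow> real"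
    and q :: "real^'n^'n \<Rightarrow> real" and Astar :: "real^'n^'n"
    and xs :: "nat \<Rightarrow> real^'n" and c :: "real^'n"
  assumes "is_quadratic q" and "strictly_convex q"
    and "Astar \<in> U0 q"
  shows "\<exists>N a0 ax az m F0 Fx Fz.
           (\<forall>t<2*r. m t \<le> CARD('n)^2 + 1) \<and>
           (\<forall>x. x \<in> robust_feasible r h b q Astar xs k \<longleftrightarrow>
                  (\<exists>z. sdp_constraints N (3*r) (2*r) a0 ax az m F0 Fx Fz x z)) \<and>
           (INF x\<in>robust_feasible r h b q Astar xs k. c \<bullet> x) =
           (INF xz\<in>{(x, z). sdp_constraints N (3*r) (2*r) a0 ax az m F0 Fx Fz x z}. c \<bullet> fst xz)"
proof -
  obtain P :: "real^'n^'n \<Rightarrow> real^'n^'n"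
    where P: "linear P" "range P = consistent_perturbations Astar xs k"
    by (rule subspace_ex_linear_range[OF subspace_consistent_perturbations])
  have "sdp_representable (3 * r) (2 * r) (CARD('n)\<^sup>2 + 1) (robust_feasible r h b q Astar xs k)"
  proof (cases "\<exists>D. q (Astar + P D) < 0")
    case True
    then show ?thesis
      using robust_feasible_sdp_representable_slater[OF assms(1) P] by blast
  next
    case False
    then have "Uk q Astar xs k = {Astar}"
      by (intro Uk_eq_singleton[OF assms(2,3) P]) (simp add: not_less)
    then show ?thesis
      by (rule robust_feasible_sdp_representable_certain)
  qed
  then show ?thesis
    unfolding sdp_representable_def using INF_projection by blast
qed

end
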